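(* Consider the symmetric coordination game in which (action 1, action 1) gives payoffs $R/R$, (action 1, action 2) gives $S/T$, (action 2, action 1) gives $T/S$, and (action 2, action 2) gives $P/P$ (first number the row player's payoff), with $R>T$ and $P>S$. Then the projected SA-IGA self-play dynamics on $[0,1]^4$ in the variables $(p_1,p_2,w_1,w_2)$ has two types of stable equilibrium points: (1) $(1,1,w_1^*,w_2^* )$, whenever $w_i^*\in[0,1]$ and $\frac{T-S}{2}w_i^*>T-R$ for $i=1,2$; (2) $(0,0,w_1^*,w_2^* )$, whenever $w_i^*\in[0,1]$ and $\frac{T-S}{2}w_i^*<P-S$ for $i=1,2$.
   Context: Player $i\in\{1,2\}$ plays action 1 with probability $p_i\in[0,1]$. Let $r_i^{jk}$ be the payoff to $i$ when $i$ plays $j$ and the opponent $-i$ plays $k$ (here $r_i^{11}=R, r_i^{12}=S, r_i^{21}=T, r_i^{22}=P$ for both $i$). The expected payoff is $V_i=\sum_{j,k}\pi_i(j)\pi_{-i}(k)r_i^{jk}$ with $\pi_i(1)=p_i,\pi_i(2)=1-p_i$; $V^{soc}=\frac12(V_1+V_2)$; player $i$'s overall payoff is $\tilde V_i=(1-w_i)V_i+w_iV^{soc}$ with social attitude $w_i\in[0,1]$. The unconstrained SA-IGA vector field $F$ on $x=(p_1,p_2,w_1,w_2)$ is $F_{p_i}=\partial\tilde V_i/\partial p_i$ (derivative in the player's own $p_i$) and $F_{w_i}=\varepsilon(V_i-V^{soc})$ for a constant $\varepsilon>0$. The projected dynamics on $[0,1]^4$ is $\dot x_j=F_j(x)$ for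 each coordinate, except that $\dot x_j=0$ whenever $x_j=0$ and $F_j(x)<0$, or $x_j=1$ and $F_j(x)>0$. An equilibrium point is a point where the projected vector field vanishes; it is stable if for every $\eta>0$ there is $\delta>0$ such that every trajectory starting within distance $\delta$ of it stays within distance $\eta$ of it for all future time. *)

theory Defs
  imports "HOL-Analysis.Analysis"
begin

type_synonym state = "real \<times> real \<times> real \<times> real"

definition p1_of :: "state \<Rightarrow> real" where "p1_of x = fst x"
definition p2_of :: "state \<Rightarrow> real" where "p2_of x = fst (snd x)"
definition w1_of :: "state \<Rightarrow> real" where "w1_of x = fst (snd (snd x))"
definition w2_of :: "state \<Rightarrow> real" where "w2_of x = snd (snd (snd x))"

definition strat :: "real \<Rightarrow> nat \<Rightarrow> real" where
  "strat p j = (if j = 1 then p else 1 - p)"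

definition rpay :: "real \<Rightarrow> real \<Rightarrow> real \<Rightarrow> real \<Rightarrow> nat \<Rightarrow> nat \<Rightarrow> real" where
  "rpay R S T P j k =
     (if j = 1 then (if k = 1 then R else S) else (if k = 1 then T else P))"

definition Vpay :: "real \<Rightarrow> real \<Rightarrow> real \<Rightarrow> real \<Rightarrow> real \<Rightarrow> real \<Rightarrow> real" where
  "Vpay R S T P p_own p_opp =
     (\<Sum>j\<in>{1::nat,2}. \<Sum>k\<in>{1::nat,2}. strat p_own j * strat p_opp k * rpay R S T P j k)"

definition V1 :: "real \<Rightarrow> real \<Rightarrow> real \<Rightarrow> real \<Rightarrow> real \<Rightarrow> real \<Rightarrow> real" where
  "V1 R S T P p1 p2 = Vpay R S T P p1 p2"
definition V2 :: "real \<Rightarrow> real \<Rightarrow> real \<Rightarrow> real \<Rightarrow> real \<Rightarrow> real \<Rightarrow> real" where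
  "V2 R S T P p1 p2 = Vpay R S T P p2 p1"
definition Vsoc :: "real \<Rightarrow> real \<Rightarrow> real \<Rightarrow> real \<Rightarrow> real \<Rightarrow> real \<Rightarrow> real" where
  "Vsoc R S T P p1 p2 = (V1 R S T P p1 p2 + V2 R S T P p1 p2) / 2"

definition Vt1 :: "real \<Rightarrow> real \<Rightarrow> real \<Rightarrow> real \<Rightarrow> real \<Rightarrow> real \<Rightarrow> real \<Rightarrow> real" where
  "Vt1 R S T P w1 p1 p2 = (1 - w1) * V1 R S T P p1 p2 + w1 * Vsoc R S T P p1 p2"
definition Vt2 :: "real \<Rightarrow> real \<Rightarrow> real \<Rightarrow> real \<Rightarrow> real \<Rightarrow> real \<Rightarrow> real \<Rightarrow> real" where
  "Vt2 R S T P w2 p1 p2 = (1 - w2) * V2 R S T P p1 p2 + w2 * Vsoc R S T P p1 p2"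

definition F_field :: "real \<Rightarrow> real \<Rightarrow> real \<Rightarrow> real \<Rightarrow> real \<Rightarrow> state \<Rightarrow> state" where
  "F_field R S T P \<epsilon> x =
    (let p1 = p1_of x; p2 = p2_of x; w1 = w1_of x; w2 = w2_of x in
     (deriv (\<lambda>q. Vt1 R S T P w1 q p2) p1,
      deriv (\<lambda>q. Vt2 R S T P w2 p1 q) p2,
      \<epsilon> * (V1 R S T P p1 p2 - Vsoc R S T P p1 p2),
      \<epsilon> * (V2 R S T P p1 p2 - Vsoc R S T P p1 p2)))"

definition proj1 :: "real \<Rightarrow> real \<Rightarrow> real" where
  "proj1 xj fj = (if (xj = 0 \<and> fj < 0) \<or> (xj = 1 \<and> fj > 0) then 0 else fj)"

definition PF_field :: "real \<Rightarrow> real \<Rightarrow> real \<Rightarrow> real \<Rightarrow> real \<Rightarrow> state \<Rightarrow> state" where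
  "PF_field R S T P \<epsilon> x =
    (let f = F_field R S T P \<epsilon> x in
     (proj1 (p1_of x) (p1_of f), proj1 (p2_of x) (p2_of f),
      proj1 (w1_of x) (w1_of f), proj1 (w2_of x) (w2_of f)))"

definition in_cube :: "state \<Rightarrow> bool" where
  "in_cube x \<longleftrightarrow> p1_of x \<in> {0..1} \<and> p2_of x \<in> {0..1} \<and> w1_of x \<in> {0..1} \<and> w2_of x \<in> {0..1}"

definition trajectory :: "real \<Rightarrow> real \<Rightarrow> real \<Rightarrow> real \<Rightarrow> real \<Rightarrow> (real \<Rightarrow> state) \<Rightarrow> bool" where
  "trajectory R S T P \<epsilon> x \<longleftrightarrow>
     continuous_on {0..} x \<and> (\<forall>t\<ge>0. in_cube (x t)) \<and>
     (\<forall>t\<ge>0. (x has_vector_derivative PF_field R S T P \<epsilon> (x t)) (at t within {t..}))"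

definition equilibrium :: "real \<Rightarrow> real \<Rightarrow> real \<Rightarrow> real \<Rightarrow> real \<Rightarrow> state \<Rightarrow> bool" where
  "equilibrium R S T P \<epsilon> e \<longleftrightarrow> PF_field R S T P \<epsilon> e = 0"

definition stable :: "real \<Rightarrow> real \<Rightarrow> real \<Rightarrow> real \<Rightarrow> real \<Rightarrow> state \<Rightarrow> bool" where
  "stable R S T P \<epsilon> e \<longleftrightarrow>
     (\<forall>\<eta>>0. \<exists>\<delta>>0. \<forall>x. trajectory R S T P \<epsilon> x \<and> dist (x 0) e < \<delta> \<longrightarrow>
        (\<forall>t\<ge>0. dist (x t) e < \<eta>))"

end

theory Submission
  imports Defs
begin

(* Both equilibria lie where the strategies are pure, p1 = p2 = q with q in {0, 1}.  There the
   gradient of each player's own payoff does not vanish but points into the boundary face p_i = q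
   (this is exactly the condition on w_i), and by continuity it stays bounded away from zero
   nearby; the projection never cancels it, so each p_i approaches q at a uniform rate.  The social
   attitudes move only at a speed proportional to |p1 - p2|, i.e. linearly in the strategy error.
   Hence K (|p1 - q|^2 + |p2 - q|^2) + |w - w*|^2 with K large is nonincreasing near the point,
   which gives Lyapunov stability (w need not return to w*, so the stability is not asymptotic). *)

lemma right_deriv_nonpos_imp_le_linear:
  fixes g g' :: "real \<Rightarrow> real"
  assumes "a \<le> b" and cont: "continuous_on {a..b} g" and "e > 0"
    and deriv: "\<And>s. a \<le> s \<Longrightarrow> s < b \<Longrightarrow>
      (g has_real_derivative g' s) (at s within {s..}) \<and> g' s \<le> 0"
  shows "g b \<le> g a + e * (b - a)"
proof -
  define A where "A = {s \<in> {a..b}. g s \<le> g a + e * (s - a)}"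
  have "closed A" unfolding A_def
    by (intro continuous_on_closed_Collect_le cont continuous_intros)
  moreover have "a \<in> A" using \<open>a \<le> b\<close> by (simp add: A_def)
  moreover have bdd: "bdd_above A" unfolding A_def by (rule bdd_aboveI[of _ b]) auto
  ultimately have mA: "Sup A \<in> A" using closed_contains_Sup by blast
  define m where "m = Sup A"
  have m: "a \<le> m" "m \<le> b" "g m \<le> g a + e * (m - a)" using mA by (auto simp: A_def m_def)
  have "m = b"
  proof (rule ccontr)
    assume "m \<noteq> b"
    with m have "m < b" by simp
    with deriv m have "(g has_real_derivative g' m) (at m within {m..})" and "g' m < e"
      using \<open>e > 0\<close> by fastforce+
    then have "((\<lambda>y. (g y - g m) / (y - m)) \<longlongrightarrow> g' m) (at_right m)"
      by (simp add: has_field_derivative_iff at_within_Ici_at_right)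
    then have "eventually (\<lambda>y. (g y - g m) / (y - m) < e) (at_right m)"
      using \<open>g' m < e\<close> by (rule order_tendstoD(2))
    then obtain d where "d > m" and d: "\<And>y. m < y \<Longrightarrow> y < d \<Longrightarrow> (g y - g m) / (y - m) < e"
      by (auto simp: eventually_at_right_field)
    define y where "y = (m + min d b) / 2"
    have y: "m < y" "y < d" "y \<le> b" using \<open>d > m\<close> \<open>m < b\<close> by (auto simp: y_def)
    with d have "g y - g m < e * (y - m)" by (simp add: divide_less_eq)
    with m y have "y \<in> A" by (simp add: A_def algebra_simps)
    then have "y \<le> m" unfolding m_def using bdd by (rule cSup_upper)
    with y show False by simp
  qed
  with m show ?thesis by simp
qed

lemma right_deriv_nonpos_imp_le:
  fixes g g' :: "real \<Rightarrow> real"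
  assumes "a \<le> b" and "continuous_on {a..b} g"
    and "\<And>s. a \<le> s \<Longrightarrow> s < b \<Longrightarrow>
      (g has_real_derivative g' s) (at s within {s..}) \<and> g' s \<le> 0"
  shows "g b \<le> g a"
proof (rule field_le_epsilon)
  fix e :: real assume "e > 0"
  then have "e / (b - a + 1) > 0" using \<open>a \<le> b\<close> by simp
  then have "g b \<le> g a + e / (b - a + 1) * (b - a)"
    by (rule right_deriv_nonpos_imp_le_linear[OF assms(1,2) _ assms(3)])
  also have "\<dots> \<le> g a + e" using \<open>a \<le> b\<close> \<open>e > 0\<close> by (simp add: field_simps)
  finally show "g b \<le> g a + e" .
qed

lemma first_time_reaching:
  fixes f :: "real \<Rightarrow> real"
  assumes "continuous_on {a..t} f" and "a \<le> t" and "\<rho> \<le> f t"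
  obtains t1 where "a \<le> t1" "t1 \<le> t" "\<rho> \<le> f t1" "\<And>s. a \<le> s \<Longrightarrow> s < t1 \<Longrightarrow> f s < \<rho>"
proof -
  define A where "A = {s \<in> {a..t}. \<rho> \<le> f s}"
  have "closed A" unfolding A_def
    by (intro continuous_on_closed_Collect_le assms continuous_intros)
  moreover have "t \<in> A" using assms by (simp add: A_def)
  moreover have bdd: "bdd_below A" unfolding A_def by (rule bdd_belowI[of _ a]) auto
  ultimately have "Inf A \<in> A" using closed_contains_Inf by blast
  moreover have "f s < \<rho>" if "a \<le> s" "s < Inf A" for s
  proof (rule ccontr)
    assume "\<not> f s < \<rho>"
    with that \<open>Inf A \<in> A\<close> have "s \<in> A" by (auto simp: A_def)
    with bdd have "Inf A \<le> s" by (rule cInf_lower[rotated])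
    with that show False by simp
  qed
  ultimately show ?thesis using that by (auto simp: A_def)
qed

lemma lyapunov_confinement:
  fixes x :: "real \<Rightarrow> 'a::metric_space" and L :: "'a \<Rightarrow> real"
  assumes cont: "continuous_on {0..} x"
    and L_lower: "\<And>y. (dist y e)\<^sup>2 \<le> L y" and L_upper: "\<And>y. L y \<le> K * (dist y e)\<^sup>2"
    and L_decr: "\<And>t. 0 \<le> t \<Longrightarrow> (\<And>s. 0 \<le> s \<Longrightarrow> s < t \<Longrightarrow> dist (x s) e < \<rho>) \<Longrightarrow> L (x t) \<le> L (x 0)"
    and start: "K * (dist (x 0) e)\<^sup>2 < \<rho>\<^sup>2" and "0 \<le> \<rho>" and "0 \<le> t"
  shows "dist (x t) e < \<rho>"
proof (rule ccontr)
  assume "\<not> dist (x t) e < \<rho>"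
  then have "\<rho> \<le> dist (x t) e" by simp
  moreover have "continuous_on {0..t} (\<lambda>s. dist (x s) e)"
    by (intro continuous_intros continuous_on_subset[OF cont]) auto
  ultimately obtain t1 where t1: "0 \<le> t1" "\<rho> \<le> dist (x t1) e"
    and before: "\<And>s. 0 \<le> s \<Longrightarrow> s < t1 \<Longrightarrow> dist (x s) e < \<rho>"
    using first_time_reaching \<open>0 \<le> t\<close> by metis
  have "\<rho>\<^sup>2 \<le> (dist (x t1) e)\<^sup>2" using t1 \<open>0 \<le> \<rho>\<close> by (intro power_mono)
  also have "\<dots> \<le> L (x t1)" by (rule L_lower)
  also have "\<dots> \<le> L (x 0)" using t1(1) before by (rule L_decr)
  also have "\<dots> \<le> K * (dist (x 0) e)\<^sup>2" by (rule L_upper)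
  finally show False using start by simp
qed

lemma dist_state_sq:
  fixes y e :: state
  shows "(dist y e)\<^sup>2 = (p1_of y - p1_of e)\<^sup>2 + (p2_of y - p2_of e)\<^sup>2
    + (w1_of y - w1_of e)\<^sup>2 + (w2_of y - w2_of e)\<^sup>2"
  by (cases y; cases e)
    (simp add: dist_Pair_Pair dist_real_def p1_of_def p2_of_def w1_of_def w2_of_def)

lemma abs_coord_le_dist:
  fixes y e :: state
  shows "\<bar>p1_of y - p1_of e\<bar> \<le> dist y e" "\<bar>p2_of y - p2_of e\<bar> \<le> dist y e"
    "\<bar>w1_of y - w1_of e\<bar> \<le> dist y e" "\<bar>w2_of y - w2_of e\<bar> \<le> dist y e"
  by (rule power2_le_imp_le; use dist_state_sq[of y e] in simp)+

lemma has_vector_derivative_coords: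
  fixes x :: "real \<Rightarrow> state"
  assumes "(x has_vector_derivative v) F"
  shows "((\<lambda>t. p1_of (x t)) has_real_derivative p1_of v) F"
    and "((\<lambda>t. p2_of (x t)) has_real_derivative p2_of v) F"
    and "((\<lambda>t. w1_of (x t)) has_real_derivative w1_of v) F"
    and "((\<lambda>t. w2_of (x t)) has_real_derivative w2_of v) F"
  using assms unfolding has_real_derivative_iff_has_vector_derivative has_vector_derivative_def
    p1_of_def p2_of_def w1_of_def w2_of_def
  by (auto intro!: derivative_eq_intros)

definition lyapunov :: "real \<Rightarrow> state \<Rightarrow> state \<Rightarrow> real" where
  "lyapunov K e y = K * ((p1_of y - p1_of e)\<^sup>2 + (p2_of y - p2_of e)\<^sup>2)
    + (w1_of y - w1_of e)\<^sup>2 + (w2_of y - w2_of e)\<^sup>2"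

definition lyapunov_rate :: "real \<Rightarrow> state \<Rightarrow> state \<Rightarrow> state \<Rightarrow> real" where
  "lyapunov_rate K e y v = 2 * K * ((p1_of y - p1_of e) * p1_of v + (p2_of y - p2_of e) * p2_of v)
    + 2 * (w1_of y - w1_of e) * w1_of v + 2 * (w2_of y - w2_of e) * w2_of v"

lemma lyapunov_bounds:
  assumes "1 \<le> K"
  shows "(dist y e)\<^sup>2 \<le> lyapunov K e y" and "lyapunov K e y \<le> K * (dist y e)\<^sup>2"
proof -
  define a where "a = (p1_of y - p1_of e)\<^sup>2 + (p2_of y - p2_of e)\<^sup>2"
  define b where "b = (w1_of y - w1_of e)\<^sup>2 + (w2_of y - w2_of e)\<^sup>2"
  have "z \<le> K * z" if "0 \<le> z" for z :: real
    using mult_right_mono[OF assms that] by simp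
  then have "a \<le> K * a" "b \<le> K * b" by (simp_all add: a_def b_def)
  moreover have "(dist y e)\<^sup>2 = a + b" "lyapunov K e y = K * a + b"
    by (simp_all add: dist_state_sq lyapunov_def a_def b_def)
  ultimately show "(dist y e)\<^sup>2 \<le> lyapunov K e y" "lyapunov K e y \<le> K * (dist y e)\<^sup>2"
    by (simp_all add: distrib_left)
qed

lemma continuous_on_lyapunov:
  "continuous_on A x \<Longrightarrow> continuous_on A (\<lambda>t. lyapunov K e (x t))"
  unfolding lyapunov_def p1_of_def p2_of_def w1_of_def w2_of_def by (intro continuous_intros)

lemma lyapunov_has_real_derivative:
  assumes "(x has_vector_derivative v) (at t within A)"
  shows "((\<lambda>\<tau>. lyapunov K e (x \<tau>)) has_real_derivative lyapunov_rate K e (x t) v) (at t within A)"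
  unfolding lyapunov_def lyapunov_rate_def
  by (rule derivative_eq_intros has_vector_derivative_coords[OF assms] refl | simp)+
    (simp add: algebra_simps)

lemma lyapunov_rate_nonpos:
  fixes y v e :: state
  defines "U \<equiv> \<bar>p1_of y - p1_of e\<bar> + \<bar>p2_of y - p2_of e\<bar>"
  assumes "0 \<le> K" and "2 * M \<le> K * c" and "dist y e \<le> 1"
    and "(p1_of y - p1_of e) * p1_of v \<le> - c * \<bar>p1_of y - p1_of e\<bar>"
    and "(p2_of y - p2_of e) * p2_of v \<le> - c * \<bar>p2_of y - p2_of e\<bar>"
    and "\<bar>w1_of v\<bar> \<le> M * U" and "\<bar>w2_of v\<bar> \<le> M * U"
  shows "lyapunov_rate K e y v \<le> 0"
proof -
  have "(w1_of y - w1_of e) * w1_of v \<le> M * U"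
  proof -
    have "(w1_of y - w1_of e) * w1_of v \<le> \<bar>w1_of y - w1_of e\<bar> * \<bar>w1_of v\<bar>"
      by (metis abs_ge_self abs_mult)
    also have "\<dots> \<le> 1 * (M * U)"
      using assms abs_coord_le_dist(3)[of y e] by (intro mult_mono) auto
    finally show ?thesis by simp
  qed
  moreover have "(w2_of y - w2_of e) * w2_of v \<le> M * U"
  proof -
    have "(w2_of y - w2_of e) * w2_of v \<le> \<bar>w2_of y - w2_of e\<bar> * \<bar>w2_of v\<bar>"
      by (metis abs_ge_self abs_mult)
    also have "\<dots> \<le> 1 * (M * U)"
      using assms abs_coord_le_dist(4)[of y e] by (intro mult_mono) auto
    finally show ?thesis by simp
  qed
  moreover have "K * ((p1_of y - p1_of e) * p1_of v + (p2_of y - p2_of e) * p2_of v) \<le> K * (- c * U)"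
    using assms by (intro mult_left_mono) (auto simp: algebra_simps)
  moreover have "2 * M * U \<le> K * c * U"
    using assms by (intro mult_right_mono) auto
  ultimately show ?thesis unfolding lyapunov_rate_def by (simp add: algebra_simps)
qed

lemma lyapunov_stability:
  fixes X :: "(real \<Rightarrow> 'a::metric_space) set" and L :: "'a \<Rightarrow> real"
  assumes "1 \<le> K" and "0 < r"
    and cont: "\<And>x. x \<in> X \<Longrightarrow> continuous_on {0..} x"
    and L_lower: "\<And>y. (dist y e)\<^sup>2 \<le> L y" and L_upper: "\<And>y. L y \<le> K * (dist y e)\<^sup>2"
    and L_decr: "\<And>x t. x \<in> X \<Longrightarrow> 0 \<le> t \<Longrightarrow> (\<And>s. 0 \<le> s \<Longrightarrow> s < t \<Longrightarrow> dist (x s) e < r)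
      \<Longrightarrow> L (x t) \<le> L (x 0)"
  shows "\<forall>\<eta>>0. \<exists>\<delta>>0. \<forall>x\<in>X. dist (x 0) e < \<delta> \<longrightarrow> (\<forall>t\<ge>0. dist (x t) e < \<eta>)"
proof (intro allI impI)
  fix \<eta> :: real assume "0 < \<eta>"
  define \<rho> where "\<rho> = min \<eta> r"
  have \<rho>: "0 < \<rho>" "\<rho> \<le> \<eta>" "\<rho> \<le> r" using \<open>0 < \<eta>\<close> \<open>0 < r\<close> by (auto simp: \<rho>_def)
  define \<delta> where "\<delta> = \<rho> / (2 * K)"
  have "0 < \<delta>" using \<rho> \<open>1 \<le> K\<close> by (simp add: \<delta>_def)
  have "K * \<delta>\<^sup>2 = \<rho>\<^sup>2 / (4 * K)" using \<open>1 \<le> K\<close> by (simp add: \<delta>_def power2_eq_square field_simps)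
  also have "\<dots> < \<rho>\<^sup>2" using \<open>1 \<le> K\<close> \<rho> by (simp add: field_simps)
  finally have K\<delta>: "K * \<delta>\<^sup>2 < \<rho>\<^sup>2" .
  have "dist (x t) e < \<eta>" if "x \<in> X" "dist (x 0) e < \<delta>" "0 \<le> t" for x t
  proof -
    have "K * (dist (x 0) e)\<^sup>2 \<le> K * \<delta>\<^sup>2"
      using that \<open>1 \<le> K\<close> by (intro mult_left_mono power_mono) auto
    with K\<delta> have start: "K * (dist (x 0) e)\<^sup>2 < \<rho>\<^sup>2" by simp
    have "dist (x t) e < \<rho>"
    proof (rule lyapunov_confinement[OF cont[OF \<open>x \<in> X\<close>] L_lower L_upper _ start _ \<open>0 \<le> t\<close>])
      show "L (x t') \<le> L (x 0)" if "0 \<le> t'" "\<And>s. 0 \<le> s \<Longrightarrow> s < t' \<Longrightarrow> dist (x s) e < \<rho>" for t'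
        using L_decr[OF \<open>x \<in> X\<close> that(1)] that(2) \<rho> by force
    qed (use \<rho> in simp)
    with \<rho> show ?thesis by simp
  qed
  with \<open>0 < \<delta>\<close> show "\<exists>\<delta>>0. \<forall>x\<in>X. dist (x 0) e < \<delta> \<longrightarrow> (\<forall>t\<ge>0. dist (x t) e < \<eta>)" by blast
qed

lemma stable_if_strategies_attracted:
  fixes R S T P \<epsilon> :: real and e :: state
  defines "\<Phi> \<equiv> PF_field R S T P \<epsilon>"
  assumes "0 < c" "0 \<le> M" "0 < r" "r \<le> 1"
    and attract1: "\<And>y. dist y e \<le> r \<Longrightarrow> in_cube y \<Longrightarrow>
      (p1_of y - p1_of e) * p1_of (\<Phi> y) \<le> - c * \<bar>p1_of y - p1_of e\<bar>"
    and attract2: "\<And>y. dist y e \<le> r \<Longrightarrow> in_cube y \<Longrightarrow>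
      (p2_of y - p2_of e) * p2_of (\<Phi> y) \<le> - c * \<bar>p2_of y - p2_of e\<bar>"
    and drift1: "\<And>y. dist y e \<le> r \<Longrightarrow> in_cube y \<Longrightarrow>
      \<bar>w1_of (\<Phi> y)\<bar> \<le> M * (\<bar>p1_of y - p1_of e\<bar> + \<bar>p2_of y - p2_of e\<bar>)"
    and drift2: "\<And>y. dist y e \<le> r \<Longrightarrow> in_cube y \<Longrightarrow>
      \<bar>w2_of (\<Phi> y)\<bar> \<le> M * (\<bar>p1_of y - p1_of e\<bar> + \<bar>p2_of y - p2_of e\<bar>)"
  shows "stable R S T P \<epsilon> e"
proof -
  define K where "K = 2 * M / c + 1"
  have K: "1 \<le> K" "2 * M \<le> K * c" using assms by (simp_all add: K_def field_simps)
  have decr: "lyapunov K e (x t) \<le> lyapunov K e (x 0)"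
    if "x \<in> {x. trajectory R S T P \<epsilon> x}" "0 \<le> t"
      and before: "\<And>s. 0 \<le> s \<Longrightarrow> s < t \<Longrightarrow> dist (x s) e < r" for x t
  proof (rule right_deriv_nonpos_imp_le[OF \<open>0 \<le> t\<close>])
    have cont: "continuous_on {0..} x" and cube: "\<And>s. 0 \<le> s \<Longrightarrow> in_cube (x s)"
      and deriv: "\<And>s. 0 \<le> s \<Longrightarrow> (x has_vector_derivative \<Phi> (x s)) (at s within {s..})"
      using that(1) by (simp_all add: trajectory_def \<Phi>_def)
    show "continuous_on {0..t} (\<lambda>s. lyapunov K e (x s))"
      by (intro continuous_on_lyapunov continuous_on_subset[OF cont]) auto
    fix s assume "0 \<le> s" "s < t"
    then have "dist (x s) e \<le> r" using before[of s] by simp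
    moreover have "in_cube (x s)" using cube \<open>0 \<le> s\<close> .
    ultimately show "((\<lambda>s. lyapunov K e (x s)) has_real_derivative
        lyapunov_rate K e (x s) (\<Phi> (x s))) (at s within {s..})
      \<and> lyapunov_rate K e (x s) (\<Phi> (x s)) \<le> 0"
      using K \<open>r \<le> 1\<close> deriv[OF \<open>0 \<le> s\<close>]
      by (intro conjI lyapunov_has_real_derivative lyapunov_rate_nonpos[where M = M and c = c]
          attract1 attract2 drift1 drift2) simp_all
  qed
  have "\<forall>\<eta>>0. \<exists>\<delta>>0. \<forall>x\<in>{x. trajectory R S T P \<epsilon> x}.
      dist (x 0) e < \<delta> \<longrightarrow> (\<forall>t\<ge>0. dist (x t) e < \<eta>)"
  proof (rule lyapunov_stability[OF K(1) \<open>0 < r\<close> _ lyapunov_bounds[OF K(1)] decr])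
    show "continuous_on {0..} x" if "x \<in> {x. trajectory R S T P \<epsilon> x}" for x
      using that by (simp add: trajectory_def)
  qed
  then show ?thesis unfolding stable_def by blast
qed

definition payoff_gradient :: "real \<Rightarrow> real \<Rightarrow> real \<Rightarrow> real \<Rightarrow> real \<Rightarrow> real \<Rightarrow> real" where
  "payoff_gradient R S T P w p_opp = p_opp * (R - T) + (1 - p_opp) * (S - P) + w * (T - S) / 2"

lemma Vpay_expand:
  "Vpay R S T P p q = p * q * R + p * (1 - q) * S + (1 - p) * q * T + (1 - p) * (1 - q) * P"
  by (simp add: Vpay_def strat_def rpay_def)

lemma deriv_Vt1: "deriv (\<lambda>p. Vt1 R S T P w p p2) p1 = payoff_gradient R S T P w p2"
proof (rule DERIV_imp_deriv)
  show "((\<lambda>p. Vt1 R S T P w p p2) has_real_derivative payoff_gradient R S T P w p2) (at p1)"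
    unfolding Vt1_def Vsoc_def V1_def V2_def Vpay_expand payoff_gradient_def
    by (rule derivative_eq_intros refl | simp)+ (simp add: algebra_simps divide_simps)
qed

lemma deriv_Vt2: "deriv (\<lambda>p. Vt2 R S T P w p1 p) p2 = payoff_gradient R S T P w p1"
proof (rule DERIV_imp_deriv)
  show "((\<lambda>p. Vt2 R S T P w p1 p) has_real_derivative payoff_gradient R S T P w p1) (at p2)"
    unfolding Vt2_def Vsoc_def V1_def V2_def Vpay_expand payoff_gradient_def
    by (rule derivative_eq_intros refl | simp)+ (simp add: algebra_simps divide_simps)
qed

lemma PF_field_coords:
  "p1_of (PF_field R S T P \<epsilon> y) = proj1 (p1_of y) (payoff_gradient R S T P (w1_of y) (p2_of y))"
  "p2_of (PF_field R S T P \<epsilon> y) = proj1 (p2_of y) (payoff_gradient R S T P (w2_of y) (p1_of y))"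
  "w1_of (PF_field R S T P \<epsilon> y) = proj1 (w1_of y) (\<epsilon> * (S - T) / 2 * (p1_of y - p2_of y))"
  "w2_of (PF_field R S T P \<epsilon> y) = proj1 (w2_of y) (\<epsilon> * (S - T) / 2 * (p2_of y - p1_of y))"
  unfolding PF_field_def F_field_def Let_def deriv_Vt1 deriv_Vt2
  by (simp_all add: p1_of_def p2_of_def w1_of_def w2_of_def Vsoc_def V1_def V2_def Vpay_expand
      algebra_simps divide_simps)

lemma state_eq_0_iff: "y = 0 \<longleftrightarrow> p1_of y = 0 \<and> p2_of y = 0 \<and> w1_of y = 0 \<and> w2_of y = 0"
  by (cases y) (auto simp: p1_of_def p2_of_def w1_of_def w2_of_def zero_prod_def)

lemma abs_payoff_gradient_diff_le:
  "\<bar>payoff_gradient R S T P w p - payoff_gradient R S T P w0 p0\<bar>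
    \<le> \<bar>R - T - S + P\<bar> * \<bar>p - p0\<bar> + \<bar>T - S\<bar> * \<bar>w - w0\<bar>"
proof -
  have "payoff_gradient R S T P w p - payoff_gradient R S T P w0 p0
      = (R - T - S + P) * (p - p0) + (T - S) / 2 * (w - w0)"
    by (simp add: payoff_gradient_def field_simps)
  also have "\<bar>\<dots>\<bar> \<le> \<bar>R - T - S + P\<bar> * \<bar>p - p0\<bar> + \<bar>T - S\<bar> / 2 * \<bar>w - w0\<bar>"
    by (rule order_trans[OF abs_triangle_ineq]) (simp add: abs_mult)
  also have "\<dots> \<le> \<bar>R - T - S + P\<bar> * \<bar>p - p0\<bar> + \<bar>T - S\<bar> * \<bar>w - w0\<bar>"
    by (simp add: mult_right_mono)
  finally show ?thesis .
qed

lemma small_positive_multiplier: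
  fixes B c :: real
  assumes "0 \<le> B" and "0 < c"
  obtains r where "0 < r" "r \<le> 1" "r * B \<le> c"
proof
  define r where "r = min 1 (c / (B + 1))"
  show "0 < r" "r \<le> 1" using assms by (simp_all add: r_def)
  have "r * B \<le> c / (B + 1) * (B + 1)"
    using assms by (intro mult_mono) (auto simp: r_def)
  with assms show "r * B \<le> c" by simp
qed

lemma payoff_gradient_bounded_away:
  assumes "\<bar>\<sigma>\<bar> = 1" and "2 * c \<le> \<sigma> * payoff_gradient R S T P w0 p0"
    and "\<bar>p - p0\<bar> \<le> r" "\<bar>w - w0\<bar> \<le> r" and "r * (\<bar>R - T - S + P\<bar> + \<bar>T - S\<bar>) \<le> c"
  shows "c \<le> \<sigma> * payoff_gradient R S T P w p"
proof -
  have "\<bar>\<sigma> * payoff_gradient R S T P w p - \<sigma> * payoff_gradient R S T P w0 p0\<bar>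
      = \<bar>payoff_gradient R S T P w p - payoff_gradient R S T P w0 p0\<bar>"
    using assms(1) by (simp add: abs_mult flip: right_diff_distrib)
  also have "\<dots> \<le> \<bar>R - T - S + P\<bar> * \<bar>p - p0\<bar> + \<bar>T - S\<bar> * \<bar>w - w0\<bar>"
    by (rule abs_payoff_gradient_diff_le)
  also have "\<dots> \<le> \<bar>R - T - S + P\<bar> * r + \<bar>T - S\<bar> * r"
    using assms by (intro add_mono mult_left_mono) auto
  also have "\<dots> \<le> c" using assms(5) by (simp add: algebra_simps)
  finally show ?thesis using assms(2) by linarith
qed

lemma abs_proj1_mult_diff_le: "\<bar>proj1 w (k * (a - b))\<bar> \<le> \<bar>k\<bar> * (\<bar>a - q\<bar> + \<bar>b - q\<bar>)"
proof -
  have "\<bar>proj1 w (k * (a - b))\<bar> \<le> \<bar>k\<bar> * \<bar>a - b\<bar>"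
    by (simp add: proj1_def abs_mult)
  also have "\<dots> \<le> \<bar>k\<bar> * (\<bar>a - q\<bar> + \<bar>b - q\<bar>)"
    by (intro mult_left_mono) auto
  finally show ?thesis .
qed

text \<open>For \<open>q \<in> {0, 1}\<close>, \<open>2 q - 1\<close> is the sign of the direction from \<open>[0, 1]\<close> towards \<open>q\<close>.\<close>

lemma proj1_vertex_eq_0: "q \<in> {0, 1} \<Longrightarrow> 0 < (2 * q - 1) * f \<Longrightarrow> proj1 q f = 0"
  by (auto simp: proj1_def)

lemma proj1_toward_vertex:
  assumes "q \<in> {0, 1}" "x \<in> {0..1}" "0 \<le> c" "c \<le> (2 * q - 1) * f"
  shows "(x - q) * proj1 x f \<le> - c * \<bar>x - q\<bar>"
proof (cases "proj1 x f = f")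
  case True
  define d where "d = \<bar>x - q\<bar>"
  have "x - q = - (d * (2 * q - 1))" using assms(1,2) by (auto simp: d_def)
  then have "(x - q) * proj1 x f = - (d * ((2 * q - 1) * f))" using True by simp
  also have "\<dots> \<le> - (d * c)" using assms(4) by (simp add: d_def mult_left_mono)
  finally show ?thesis by (simp add: d_def mult.commute)
next
  case False
  then have "x = q" using assms by (auto simp: proj1_def split: if_splits)
  then show ?thesis by simp
qed

lemma vertex_equilibrium:
  assumes "q \<in> {0, 1}"
    and "0 < (2 * q - 1) * payoff_gradient R S T P w1 q"
    and "0 < (2 * q - 1) * payoff_gradient R S T P w2 q"
  shows "equilibrium R S T P \<epsilon> (q, q, w1, w2)"
  using proj1_vertex_eq_0[OF assms(1,2)] proj1_vertex_eq_0[OF assms(1,3)]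
  unfolding equilibrium_def state_eq_0_iff PF_field_coords
  by (simp add: p1_of_def p2_of_def w1_of_def w2_of_def proj1_def)

lemma vertex_stable:
  assumes q: "q \<in> {0, 1}"
    and "0 < (2 * q - 1) * payoff_gradient R S T P w1 q"
    and "0 < (2 * q - 1) * payoff_gradient R S T P w2 q"
  shows "stable R S T P \<epsilon> (q, q, w1, w2)"
proof -
  define e :: state where "e = (q, q, w1, w2)"
  have e: "p1_of e = q" "p2_of e = q" "w1_of e = w1" "w2_of e = w2"
    by (simp_all add: e_def p1_of_def p2_of_def w1_of_def w2_of_def)
  have \<sigma>: "\<bar>2 * q - 1\<bar> = 1" using q by auto
  define c where "c = min ((2 * q - 1) * payoff_gradient R S T P w1 q)
    ((2 * q - 1) * payoff_gradient R S T P w2 q) / 2"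
  have c: "0 < c" "2 * c \<le> (2 * q - 1) * payoff_gradient R S T P w1 q"
    "2 * c \<le> (2 * q - 1) * payoff_gradient R S T P w2 q"
    using assms(2,3) by (auto simp: c_def)
  obtain r where r: "0 < r" "r \<le> 1" "r * (\<bar>R - T - S + P\<bar> + \<bar>T - S\<bar>) \<le> c"
    using small_positive_multiplier[OF _ \<open>0 < c\<close>] by (metis abs_ge_zero add_nonneg_nonneg)
  have "stable R S T P \<epsilon> e"
  proof (rule stable_if_strategies_attracted[OF \<open>0 < c\<close> abs_ge_zero \<open>0 < r\<close> \<open>r \<le> 1\<close>])
    fix y assume "dist y e \<le> r" "in_cube y"
    have close: "\<bar>p1_of y - q\<bar> \<le> r" "\<bar>p2_of y - q\<bar> \<le> r" "\<bar>w1_of y - w1\<bar> \<le> r" "\<bar>w2_of y - w2\<bar> \<le> r"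
      using abs_coord_le_dist[of y e] \<open>dist y e \<le> r\<close> unfolding e by linarith+
    have cube: "p1_of y \<in> {0..1}" "p2_of y \<in> {0..1}" using \<open>in_cube y\<close> by (simp_all add: in_cube_def)
    have "c \<le> (2 * q - 1) * payoff_gradient R S T P (w1_of y) (p2_of y)"
      by (rule payoff_gradient_bounded_away[OF \<sigma> c(2) close(2,3) r(3)])
    then show "(p1_of y - p1_of e) * p1_of (PF_field R S T P \<epsilon> y) \<le> - c * \<bar>p1_of y - p1_of e\<bar>"
      unfolding PF_field_coords e using c(1) by (intro proj1_toward_vertex[OF q cube(1)]) auto
    have "c \<le> (2 * q - 1) * payoff_gradient R S T P (w2_of y) (p1_of y)"
      by (rule payoff_gradient_bounded_away[OF \<sigma> c(3) close(1,4) r(3)])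
    then show "(p2_of y - p2_of e) * p2_of (PF_field R S T P \<epsilon> y) \<le> - c * \<bar>p2_of y - p2_of e\<bar>"
      unfolding PF_field_coords e using c(1) by (intro proj1_toward_vertex[OF q cube(2)]) auto
    show "\<bar>w1_of (PF_field R S T P \<epsilon> y)\<bar>
        \<le> \<bar>\<epsilon> * (S - T) / 2\<bar> * (\<bar>p1_of y - p1_of e\<bar> + \<bar>p2_of y - p2_of e\<bar>)"
      unfolding PF_field_coords e by (rule abs_proj1_mult_diff_le)
    show "\<bar>w2_of (PF_field R S T P \<epsilon> y)\<bar>
        \<le> \<bar>\<epsilon> * (S - T) / 2\<bar> * (\<bar>p1_of y - p1_of e\<bar> + \<bar>p2_of y - p2_of e\<bar>)"
      unfolding PF_field_coords e by (subst add.commute) (rule abs_proj1_mult_diff_le)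
  qed
  then show ?thesis by (simp add: e_def)
qed

text \<open>None of the hypotheses \<open>R > T\<close>, \<open>P > S\<close>, \<open>\<epsilon> > 0\<close>, \<open>w\<^sub>i \<in> [0, 1]\<close> is needed:
  the conditions on \<open>w\<^sub>i\<close> alone make both gradients point into the vertex.\<close>

theorem corollary2:
  fixes R S T P \<epsilon> :: real
  assumes "R > T" and "P > S" and "\<epsilon> > 0"
  shows "(\<forall>w1 w2. w1 \<in> {0..1} \<and> w2 \<in> {0..1} \<and>
            (T - S) / 2 * w1 > T - R \<and> (T - S) / 2 * w2 > T - R \<longrightarrow>
            equilibrium R S T P \<epsilon> (1, 1, w1, w2) \<and> stable R S T P \<epsilon> (1, 1, w1, w2))
       \<and> (\<forall>w1 w2. w1 \<in> {0..1} \<and> w2 \<in> {0..1} \<and>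
            (T - S) / 2 * w1 < P - S \<and> (T - S) / 2 * w2 < P - S \<longrightarrow>
            equilibrium R S T P \<epsilon> (0, 0, w1, w2) \<and> stable R S T P \<epsilon> (0, 0, w1, w2))"
proof (rule conjI; intro allI impI)
  fix w1 w2 :: real
  assume "w1 \<in> {0..1} \<and> w2 \<in> {0..1} \<and> (T - S) / 2 * w1 > T - R \<and> (T - S) / 2 * w2 > T - R"
  then have "0 < (2 * 1 - 1) * payoff_gradient R S T P w1 1"
    "0 < (2 * 1 - 1) * payoff_gradient R S T P w2 1"
    by (simp_all add: payoff_gradient_def field_simps)
  then show "equilibrium R S T P \<epsilon> (1, 1, w1, w2) \<and> stable R S T P \<epsilon> (1, 1, w1, w2)"
    by (intro conjI vertex_equilibrium vertex_stable) simp_all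
next
  fix w1 w2 :: real
  assume "w1 \<in> {0..1} \<and> w2 \<in> {0..1} \<and> (T - S) / 2 * w1 < P - S \<and> (T - S) / 2 * w2 < P - S"
  then have "0 < (2 * 0 - 1) * payoff_gradient R S T P w1 0"
    "0 < (2 * 0 - 1) * payoff_gradient R S T P w2 0"
    by (simp_all add: payoff_gradient_def field_simps)
  then show "equilibrium R S T P \<epsilon> (0, 0, w1, w2) \<and> stable R S T P \<epsilon> (0, 0, w1, w2)"
    by (intro conjI vertex_equilibrium vertex_stable) simp_all
qed

end
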